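(* Let $({\bf x}_i,y_i)$, $i=1,\dots,n$, with $y_i\in\{\pm1\}$, and let $\lambda_1>0$, $\lambda_2\ge0$, $\lambda_3>0$, $\delta>0$. Let $f(b,{\bf w})=\frac1n\sum_i\phi_H(y_i(b+{\bf x}_i^\top{\bf w}))$, $L_f=\frac{1}{n\delta}\sum_i y_i^2(1+\|{\bf x}_i\|^2)$, and let ${\bf u}^*=(b^*,{\bf w}^* )$ be the unique minimizer of $F(b,{\bf w})=f(b,{\bf w})+\lambda_1\|{\bf w}\|_1+\frac{\lambda_2}{2}\|{\bf w}\|^2+\frac{\lambda_3}{2}b^2$. Starting from any ${\bf u}^0=(b^0,{\bf w}^0)$, let $$b^k=\frac{L_f b^{k-1}-\nabla_b f({\bf u}^{k-1})}{L_f+\lambda_3},\qquad {\bf w}^k=\frac{1}{L_f+\lambda_2}\mathcal{S}_{\lambda_1}\big(L_f{\bf w}^{k-1}-\nabla_{\bf w}f({\bf u}^{k-1})\big),\quad k\ge1.$$ Let $Q(b,{\bf w})=f(b,{\bf w})+\frac{\lambda_2}{2}\|{\bf w}\|^2+\frac{\lambda_3}{2}b^2$, $h_i({\bf u})=w_i-\frac{1}{L_f+\lambda_2}\nabla_{w_i}Q({\bf u})$ for ${\bf u}=(b,{\bf w})$, and $$\mathcal{I}=\{i:|\nabla_{w_i}Q({\bf u}^* )|<\lambda_1\},\qquad \mathcal{E}=\{i:|\nabla_{w_i}Q({\bf u}^* )|=\lambda_1\}.$$ Then $\mathrm{supp}({\bf w}^* )\subset\mathcal{E}$ and $w_i^*=0$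 for all $i\in\mathcal{I}$. Moreover, for all but finitely many $k$, $w_i^k=0$ for all $i\in\mathcal{I}$ and $\mathrm{sign}(h_i({\bf u}^k))=\mathrm{sign}(h_i({\bf u}^* ))$ for all $i\in\mathcal{E}$.
   Context: $\phi_H$ is the huberized hinge loss: $\phi_H(t)=0$ for $t>1$, $\frac{(1-t)^2}{2\delta}$ for $1-\delta<t\le1$, $1-t-\frac\delta2$ for $t\le1-\delta$. $\mathcal{S}_\nu(t)=\mathrm{sign}(t)\max(|t|-\nu,0)$ componentwise. $w_i$ denotes the $i$-th component of ${\bf w}$ and $\mathrm{supp}({\bf w})=\{i:w_i\neq0\}$. The iteration above is the proximal gradient method with constant step parameter $L_f$ and no extrapolation. *)

theory Defs
  imports "HOL-Analysis.Analysis"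
begin

definition phiH :: "real \<Rightarrow> real \<Rightarrow> real" where
  "phiH \<delta> t = (if t > 1 then 0
                 else if 1 - \<delta> < t then (1 - t)^2 / (2 * \<delta>)
                 else 1 - t - \<delta> / 2)"

definition soft :: "real \<Rightarrow> real^'p \<Rightarrow> real^'p" where
  "soft \<nu> v = (\<chi> i. sgn (v $ i) * max (\<bar>v $ i\<bar> - \<nu>) 0)"

definition hfit :: "nat \<Rightarrow> (nat \<Rightarrow> real^'p) \<Rightarrow> (nat \<Rightarrow> real) \<Rightarrow> real
                    \<Rightarrow> real \<Rightarrow> real^'p \<Rightarrow> real" where
  "hfit n xs ys \<delta> b w = (1 / real n) * (\<Sum>i<n. phiH \<delta> (ys i * (b + xs i \<bullet> w)))"

definition Lconst :: "nat \<Rightarrow> (nat \<Rightarrow> real^'p) \<Rightarrow> (nat \<Rightarrow> real) \<Rightarrow> real \<Rightarrow> real" where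
  "Lconst n xs ys \<delta> = (1 / (real n * \<delta>)) * (\<Sum>i<n. (ys i)^2 * (1 + (norm (xs i))^2))"

definition l1norm :: "real^'p \<Rightarrow> real" where
  "l1norm w = (\<Sum>i\<in>UNIV. \<bar>w $ i\<bar>)"

definition pd_b :: "(real \<Rightarrow> real^'p \<Rightarrow> real) \<Rightarrow> real \<Rightarrow> real^'p \<Rightarrow> real" where
  "pd_b g b w = deriv (\<lambda>t. g t w) b"

definition pd_w :: "(real \<Rightarrow> real^'p \<Rightarrow> real) \<Rightarrow> real \<Rightarrow> real^'p \<Rightarrow> real^'p" where
  "pd_w g b w = (\<chi> j. deriv (\<lambda>t. g b (w + t *\<^sub>R axis j 1)) 0)"

end

theory Submission
  imports Defs
begin

text \<open>
  The huberized hinge loss is convex with a \<open>1/\<delta>\<close>-Lipschitz derivative, so the data term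
  \<open>f\<close> is convex and \<open>L\<^sub>f\<close>-smooth. For such a term one proximal gradient step
  \<open>u \<mapsto> T u\<close> satisfies the three-point inequality
  \<open>F (T u) + L\<^sub>f/2 \<parallel>z - T u\<parallel>\<^sup>2 \<le> F z + L\<^sub>f/2 \<parallel>z - u\<parallel>\<^sup>2\<close>.
  With \<open>z = u\<^sup>*\<close> it makes \<open>F(u\<^sup>k) - F(u\<^sup>*)\<close> summable, and since \<open>F\<close> is continuous,
  coercive and has a unique minimizer, \<open>u\<^sup>k \<rightarrow> u\<^sup>*\<close>. With \<open>z = u = u\<^sup>*\<close> it shows that
  \<open>u\<^sup>*\<close> is a fixed point of \<open>T\<close>; reading the soft-thresholding formula at the fixed point
  gives \<open>|\<nabla>\<^sub>w\<^sub>iQ(u\<^sup>*)| = \<lambda>\<^sub>1\<close> on the support of \<open>w\<^sup>*\<close>. Finally \<open>h\<^sub>i\<close> is the \<open>i\<close>-th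
  component of the forward step \<open>L\<^sub>f w - \<nabla>\<^sub>wf\<close> divided by \<open>L\<^sub>f + \<lambda>\<^sub>2\<close>; by continuity it
  eventually stays below \<open>\<lambda>\<^sub>1\<close> in absolute value on \<open>\<I>\<close>, where soft thresholding then
  returns \<open>0\<close>, and keeps its nonzero sign on \<open>\<E>\<close>.
\<close>

lemma above_tangent_of_mono_deriv:
  fixes f f' :: "real \<Rightarrow> real"
  assumes "\<And>x. (f has_real_derivative f' x) (at x)" and "mono f'"
  shows "f t + f' t * (s - t) \<le> f s"
proof -
  have "convex_on UNIV f"
    by (rule convex_on_realI[where f' = f']) (use assms in \<open>auto dest: monoD\<close>)
  then have "f' t * (s - t) \<le> f s - f t"
    by (rule convex_on_imp_above_tangent) (use assms(1) in auto)
  then show ?thesis by simp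
qed

lemma soft_threshold_cases:
  fixes M l1 r v :: real
  assumes "M > 0" and "l1 \<ge> 0" and "M * v = sgn r * max (\<bar>r\<bar> - l1) 0"
  obtains "v = 0" "\<bar>r\<bar> \<le> l1" | "v > 0" "M * v - r = - l1" | "v < 0" "M * v - r = l1"
proof (cases "\<bar>r\<bar> \<le> l1")
  case True
  then show ?thesis using assms that(1) by (simp add: max_def)
next
  case False
  then have "r > l1 \<or> r < - l1" by linarith
  then show ?thesis
  proof
    assume "r > l1"
    then have "M * v = r - l1" using assms(2,3) by (simp add: max_def)
    then have "v > 0" using \<open>r > l1\<close> assms(1) by (metis diff_gt_0_iff_gt zero_less_mult_pos)
    then show ?thesis using that(2) \<open>M * v = r - l1\<close> by simp
  next
    assume "r < - l1"
    then have "M * v = r + l1" using assms(2,3) by (simp add: max_def)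
    then have "M * v < 0" using \<open>r < - l1\<close> by simp
    then have "v < 0" using assms(1) by (simp add: mult_less_0_iff)
    then show ?thesis using that(3) \<open>M * v = r + l1\<close> by simp
  qed
qed

lemma soft_threshold_subgradient:
  fixes M l1 r v z :: real
  assumes "M > 0" and "l1 \<ge> 0" and "M * v = sgn r * max (\<bar>r\<bar> - l1) 0"
  shows "0 \<le> (z - v) * (M * v - r) + l1 * \<bar>z\<bar> - l1 * \<bar>v\<bar>"
  using assms
proof (cases rule: soft_threshold_cases)
  case 1
  have "r * z \<le> \<bar>r\<bar> * \<bar>z\<bar>" by (metis abs_ge_self abs_mult)
  also have "\<dots> \<le> l1 * \<bar>z\<bar>" using 1 by (simp add: mult_right_mono)
  finally show ?thesis using 1 by (simp add: mult.commute)
next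
  case 2
  have "l1 * z \<le> l1 * \<bar>z\<bar>" using assms(2) by (simp add: mult_left_mono)
  then show ?thesis by (simp only: 2(2)) (use 2(1) in \<open>simp add: algebra_simps\<close>)
next
  case 3
  have "l1 * (- z) \<le> l1 * \<bar>z\<bar>" using assms(2) by (intro mult_left_mono) auto
  then show ?thesis by (simp only: 3(2)) (use 3(1) in \<open>simp add: algebra_simps\<close>)
qed

lemma soft_threshold_three_point:
  fixes L lam l1 c g v z :: real
  assumes "L \<ge> 0" and "lam \<ge> 0" and "L + lam > 0" and "l1 \<ge> 0"
    and "(L + lam) * v = sgn (L * c - g) * max (\<bar>L * c - g\<bar> - l1) 0"
  shows "g * (v - c) + L / 2 * (v - c)\<^sup>2 + lam / 2 * v\<^sup>2 + l1 * \<bar>v\<bar> + L / 2 * (z - v)\<^sup>2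
         \<le> g * (z - c) + L / 2 * (z - c)\<^sup>2 + lam / 2 * z\<^sup>2 + l1 * \<bar>z\<bar>"
proof -
  have "(g * (z - c) + L / 2 * (z - c)\<^sup>2 + lam / 2 * z\<^sup>2 + l1 * \<bar>z\<bar>)
        - (g * (v - c) + L / 2 * (v - c)\<^sup>2 + lam / 2 * v\<^sup>2 + l1 * \<bar>v\<bar> + L / 2 * (z - v)\<^sup>2)
      = ((z - v) * ((L + lam) * v - (L * c - g)) + l1 * \<bar>z\<bar> - l1 * \<bar>v\<bar>) + lam / 2 * (z - v)\<^sup>2"
    by (simp add: field_simps power2_eq_square)
  moreover have "0 \<le> (z - v) * ((L + lam) * v - (L * c - g)) + l1 * \<bar>z\<bar> - l1 * \<bar>v\<bar>"
    using soft_threshold_subgradient assms(3-5) by blast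
  moreover have "0 \<le> lam / 2 * (z - v)\<^sup>2" using assms(2) by simp
  ultimately show ?thesis by linarith
qed

lemma soft_threshold_nonzero:
  fixes M l1 r v :: real
  assumes "M > 0" and "l1 \<ge> 0" and "M * v = sgn r * max (\<bar>r\<bar> - l1) 0" and "v \<noteq> 0"
  shows "\<bar>M * v - r\<bar> = l1"
  using assms(1-3) by (cases rule: soft_threshold_cases) (use assms(2,4) in auto)

lemma tendsto_zero_if_dominated_by_decrease:
  fixes a D :: "nat \<Rightarrow> real"
  assumes "\<And>k. 0 \<le> a k" and "\<And>k. 0 \<le> D k" and "\<And>k. a k + D (Suc k) \<le> D k"
  shows "a \<longlonglongrightarrow> 0"
proof -
  have partial_sums: "(\<Sum>k<N. a k) \<le> D 0 - D N" for N
  proof (induction N)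
    case (Suc N)
    then show ?case using assms(3)[of N] by simp
  qed simp
  have "(\<Sum>k<N. a k) \<le> D 0" for N
    using partial_sums[of N] assms(2)[of N] by linarith
  then have "summable a"
    using assms(1) by (intro summableI_nonneg_bounded)
  then show ?thesis by (rule summable_LIMSEQ_zero)
qed

lemma minimizing_sequence_tendsto:
  fixes g :: "'a::heine_borel \<Rightarrow> real"
  assumes cont: "continuous_on UNIV g" and coercive: "\<And>C. bounded {x. g x \<le> C}"
    and min: "\<And>x. g x0 \<le> g x" and unique: "\<And>x. g x = g x0 \<Longrightarrow> x = x0"
    and lim: "(\<lambda>k. g (X k)) \<longlonglongrightarrow> g x0"
  shows "X \<longlonglongrightarrow> x0"
proof (rule tendstoI)
  fix \<epsilon> :: real
  assume "\<epsilon> > 0"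
  define S where "S = {x. \<epsilon> \<le> dist x x0} \<inter> {x. g x \<le> g x0 + 1}"
  have "compact S"
    unfolding S_def compact_eq_bounded_closed
    by (intro conjI closed_Int closed_Collect_le cont continuous_intros bounded_Int)
       (use coercive in auto)
  obtain \<eta> where "\<eta> > 0" and \<eta>: "\<And>x. x \<in> S \<Longrightarrow> g x0 + \<eta> \<le> g x"
  proof (cases "S = {}")
    case False
    then obtain q where "q \<in> S" and q: "\<And>x. x \<in> S \<Longrightarrow> g q \<le> g x"
      using continuous_attains_inf[OF \<open>compact S\<close> _ continuous_on_subset[OF cont]] by blast
    then have "q \<noteq> x0" using \<open>\<epsilon> > 0\<close> by (auto simp: S_def)
    then have "g x0 < g q" using min[of q] unique[of q] by fastforce
    then show ?thesis using that[of "g q - g x0"] q by auto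
  qed (use that[of 1] in auto)
  have "eventually (\<lambda>k. dist (g (X k)) (g x0) < min 1 \<eta>) sequentially"
    using lim \<open>\<eta> > 0\<close> by (intro tendstoD) auto
  then show "eventually (\<lambda>k. dist (X k) x0 < \<epsilon>) sequentially"
  proof eventually_elim
    case (elim k)
    then have "X k \<notin> S" using \<eta>[of "X k"] by (auto simp: dist_real_def)
    with elim show ?case by (auto simp: S_def dist_real_def not_le)
  qed
qed

lemma sq_add_inner_le:
  fixes x v :: "'a::real_inner"
  shows "(a + x \<bullet> v)\<^sup>2 \<le> (1 + (norm x)\<^sup>2) * (a\<^sup>2 + (norm v)\<^sup>2)"
proof -
  have "\<bar>a + x \<bullet> v\<bar> \<le> \<bar>a\<bar> + norm x * norm v"
    using Cauchy_Schwarz_ineq2[of x v] by linarith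
  then have "(a + x \<bullet> v)\<^sup>2 \<le> (\<bar>a\<bar> + norm x * norm v)\<^sup>2"
    by (metis abs_ge_zero power2_abs power_mono)
  also have "\<dots> \<le> (1 + (norm x)\<^sup>2) * (a\<^sup>2 + (norm v)\<^sup>2)"
    using zero_le_power2[of "norm x * \<bar>a\<bar> - norm v"]
    by (simp add: power2_eq_square algebra_simps)
  finally show ?thesis .
qed

section \<open>The huberized hinge loss\<close>

lemma has_real_derivative_pos_part_sq:
  "((\<lambda>s. (max 0 s)\<^sup>2) has_real_derivative 2 * max 0 s) (at (s::real))"
proof (cases s "0::real" rule: linorder_cases)
  case less
  have "((\<lambda>_. 0) has_real_derivative 0) (at s)" by simp
  then have "((\<lambda>s. (max 0 s)\<^sup>2) has_real_derivative 0) (at s)"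
    by (rule has_field_derivative_transform_within_open[where S = "{..<0}"])
       (use less in \<open>auto simp: max_def\<close>)
  then show ?thesis using less by simp
next
  case equal
  have "((\<lambda>h. max 0 h) \<longlongrightarrow> 0) (at (0::real))"
    using tendsto_max[OF tendsto_const tendsto_ident_at, of 0 0 UNIV] by simp
  moreover have "((max 0 h)\<^sup>2 - (max 0 0)\<^sup>2) / h = max 0 h" for h :: real
    by (cases "h \<le> 0") (simp_all add: max_def power2_eq_square)
  ultimately show ?thesis
    unfolding equal DERIV_def by simp
next
  case greater
  have "((\<lambda>s. s\<^sup>2) has_real_derivative 2 * s) (at s)"
    by (auto intro!: derivative_eq_intros)
  then have "((\<lambda>s. (max 0 s)\<^sup>2) has_real_derivative 2 * s) (at s)"
    by (rule has_field_derivative_transform_within_open[where S = "{0<..}"])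
       (use greater in \<open>auto simp: max_def\<close>)
  then show ?thesis using greater by simp
qed

lemma phiH_eq_pos_part_sq:
  assumes "\<delta> > 0"
  shows "phiH \<delta> t = ((max 0 (1 - t))\<^sup>2 - (max 0 (1 - \<delta> - t))\<^sup>2) / (2 * \<delta>)"
  using assms by (auto simp: phiH_def max_def field_simps power2_eq_square)

definition dphiH :: "real \<Rightarrow> real \<Rightarrow> real" where
  "dphiH \<delta> t = (max 0 (1 - \<delta> - t) - max 0 (1 - t)) / \<delta>"

lemma has_real_derivative_phiH:
  assumes "\<delta> > 0"
  shows "(phiH \<delta> has_real_derivative dphiH \<delta> t) (at t)"
proof -
  have phiH: "phiH \<delta> = (\<lambda>t. ((max 0 (1 - t))\<^sup>2 - (max 0 (1 - \<delta> - t))\<^sup>2) / (2 * \<delta>))"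
    using phiH_eq_pos_part_sq[OF assms] by blast
  have dphiH: "dphiH \<delta> t = (2 * max 0 (1 - t) * - 1 - 2 * max 0 (1 - \<delta> - t) * - 1) / (2 * \<delta>)"
    using assms by (simp add: dphiH_def field_simps)
  show ?thesis
    unfolding phiH dphiH
    by (intro DERIV_cdivide DERIV_diff DERIV_chain2[OF has_real_derivative_pos_part_sq])
       (auto intro!: derivative_eq_intros)
qed

lemma mono_dphiH: "\<delta> > 0 \<Longrightarrow> mono (dphiH \<delta>)"
  unfolding dphiH_def by (intro monoI divide_right_mono) (auto simp: max_def)

lemma mono_quadratic_minus_dphiH:
  assumes "\<delta> > 0"
  shows "mono (\<lambda>t. t / \<delta> - dphiH \<delta> t)"
proof -
  have "t / \<delta> - dphiH \<delta> t = (t + max 0 (1 - t) - max 0 (1 - \<delta> - t)) / \<delta>" for t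
    by (simp add: dphiH_def diff_divide_distrib add_divide_distrib)
  moreover have "mono (\<lambda>t. (t + max 0 (1 - t) - max 0 (1 - \<delta> - t)) / \<delta>)"
    using assms by (intro monoI divide_right_mono) (auto simp: max_def)
  ultimately show ?thesis by simp
qed

lemma phiH_above_tangent: "\<delta> > 0 \<Longrightarrow> phiH \<delta> t + dphiH \<delta> t * (s - t) \<le> phiH \<delta> s"
  by (rule above_tangent_of_mono_deriv[OF has_real_derivative_phiH mono_dphiH])

lemma phiH_below_quadratic:
  assumes "\<delta> > 0"
  shows "phiH \<delta> s \<le> phiH \<delta> t + dphiH \<delta> t * (s - t) + (s - t)\<^sup>2 / (2 * \<delta>)"
proof -
  have "((\<lambda>t. t\<^sup>2 / (2 * \<delta>) - phiH \<delta> t) has_real_derivative t / \<delta> - dphiH \<delta> t) (at t)" for t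
  proof (rule DERIV_diff[OF _ has_real_derivative_phiH[OF assms]])
    show "((\<lambda>t. t\<^sup>2 / (2 * \<delta>)) has_real_derivative t / \<delta>) (at t)"
      using assms by (auto intro!: derivative_eq_intros)
  qed
  from above_tangent_of_mono_deriv[OF this mono_quadratic_minus_dphiH[OF assms]]
  have "t\<^sup>2 / (2 * \<delta>) - phiH \<delta> t + (t / \<delta> - dphiH \<delta> t) * (s - t) \<le> s\<^sup>2 / (2 * \<delta>) - phiH \<delta> s" .
  moreover have "s\<^sup>2 / (2 * \<delta>) - t\<^sup>2 / (2 * \<delta>) - t / \<delta> * (s - t) = (s - t)\<^sup>2 / (2 * \<delta>)"
    using assms by (simp add: field_simps power2_eq_square)
  ultimately show ?thesis by (simp add: algebra_simps)
qed

lemma continuous_on_phiH_comp [continuous_intros]: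
  assumes "\<delta> > 0" and "continuous_on S g"
  shows "continuous_on S (\<lambda>x. phiH \<delta> (g x))"
  using continuous_on_compose2[OF _ assms(2), of UNIV "phiH \<delta>"]
    DERIV_isCont[OF has_real_derivative_phiH[OF assms(1)]]
  by (auto simp: continuous_on_eq_continuous_at)

section \<open>The huberized SVM objective and its proximal gradient step\<close>

locale huberized_svm =
  fixes n :: nat and xs :: "nat \<Rightarrow> real^'p" and ys :: "nat \<Rightarrow> real"
    and \<delta> lam1 lam2 lam3 :: real
  assumes n_pos: "n \<ge> 1" and labels: "\<forall>i<n. ys i \<in> {-1, 1}"
    and lam1_pos: "lam1 > 0" and lam2_nonneg: "lam2 \<ge> 0" and lam3_pos: "lam3 > 0"
    and delta_pos: "\<delta> > 0"
begin

abbreviation L :: real where "L \<equiv> Lconst n xs ys \<delta>"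

lemma L_pos: "L > 0"
proof -
  have "(ys i)\<^sup>2 = 1" if "i < n" for i
    using labels that by auto
  then have "0 < (\<Sum>i<n. (ys i)\<^sup>2 * (1 + (norm (xs i))\<^sup>2))"
    using n_pos by (intro sum_pos) (auto intro: add_pos_nonneg simp: lessThan_empty_iff)
  then show ?thesis
    using n_pos delta_pos by (simp add: Lconst_def)
qed

definition margin :: "nat \<Rightarrow> real \<Rightarrow> real^'p \<Rightarrow> real" where
  "margin i b w = ys i * (b + xs i \<bullet> w)"

definition grad_b :: "real \<Rightarrow> real^'p \<Rightarrow> real" where
  "grad_b b w = (1 / real n) * (\<Sum>i<n. dphiH \<delta> (margin i b w) * ys i)"

definition grad_w :: "real \<Rightarrow> real^'p \<Rightarrow> real^'p" where
  "grad_w b w = (1 / real n) *\<^sub>R (\<Sum>i<n. (dphiH \<delta> (margin i b w) * ys i) *\<^sub>R xs i)"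

definition grad_Q :: "real \<Rightarrow> real^'p \<Rightarrow> real^'p" where
  "grad_Q b w = grad_w b w + lam2 *\<^sub>R w"

lemma hfit_eq: "hfit n xs ys \<delta> b w = (1 / real n) * (\<Sum>i<n. phiH \<delta> (margin i b w))"
  by (simp add: hfit_def margin_def)

lemma margin_diff:
  "margin i b' w' - margin i b w = ys i * ((b' - b) + xs i \<bullet> (w' - w))"
  by (simp add: margin_def inner_diff_right algebra_simps)

lemma grad_directional:
  "grad_b b w * db + grad_w b w \<bullet> dw
   = (1 / real n) * (\<Sum>i<n. dphiH \<delta> (margin i b w) * (ys i * (db + xs i \<bullet> dw)))"
  by (simp add: grad_b_def grad_w_def inner_sum_left sum_distrib_left sum_distrib_right
      sum.distrib[symmetric] algebra_simps)

lemma has_real_derivative_hfit_along: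
  "((\<lambda>t. hfit n xs ys \<delta> (b + t * db) (w + t *\<^sub>R dw)) has_real_derivative
     grad_b (b + t * db) (w + t *\<^sub>R dw) * db + grad_w (b + t * db) (w + t *\<^sub>R dw) \<bullet> dw) (at t)"
proof -
  have "((\<lambda>t. phiH \<delta> (margin i (b + t * db) (w + t *\<^sub>R dw))) has_real_derivative
          dphiH \<delta> (margin i (b + t * db) (w + t *\<^sub>R dw)) * (ys i * (db + xs i \<bullet> dw))) (at t)" for i
    unfolding margin_def
    by (rule DERIV_chain2[OF has_real_derivative_phiH[OF delta_pos]])
       (auto intro!: derivative_eq_intros simp: inner_add_right)
  then show ?thesis
    unfolding hfit_eq grad_directional by (intro DERIV_cmult DERIV_sum)
qed

lemma pd_b_hfit: "pd_b (hfit n xs ys \<delta>) b w = grad_b b w"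
  using has_real_derivative_hfit_along[of 0 1 w 0 b] unfolding pd_b_def
  by (intro DERIV_imp_deriv) simp

lemma pd_w_hfit: "pd_w (hfit n xs ys \<delta>) b w = grad_w b w"
proof -
  have "deriv (\<lambda>t. hfit n xs ys \<delta> b (w + t *\<^sub>R axis j 1)) 0 = grad_w b w $ j" for j
    using has_real_derivative_hfit_along[of b 0 w "axis j 1" 0]
    by (intro DERIV_imp_deriv) (simp add: inner_axis)
  then show ?thesis by (simp add: pd_w_def vec_eq_iff)
qed

lemma pd_w_penalized:
  "pd_w (\<lambda>b w. hfit n xs ys \<delta> b w + lam2 / 2 * (norm w)\<^sup>2 + lam3 / 2 * b\<^sup>2) b w = grad_Q b w"
proof -
  have "((\<lambda>t. hfit n xs ys \<delta> b (w + t *\<^sub>R axis j 1) + lam2 / 2 * (norm (w + t *\<^sub>R axis j 1))\<^sup>2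
              + lam3 / 2 * b\<^sup>2) has_real_derivative grad_w b w $ j + lam2 * w $ j) (at 0)" for j
  proof -
    have norm_shift: "(norm (w + t *\<^sub>R axis j 1))\<^sup>2 = (norm w)\<^sup>2 + 2 * t * w $ j + t\<^sup>2" for t
      unfolding power2_norm_eq_inner
      by (simp add: inner_add_left inner_add_right inner_axis inner_axis_axis
          inner_commute[of "axis j 1"] algebra_simps power2_eq_square)
    have "((\<lambda>t. lam2 / 2 * ((norm w)\<^sup>2 + 2 * t * w $ j + t\<^sup>2) + lam3 / 2 * b\<^sup>2)
           has_real_derivative lam2 * w $ j) (at 0)"
      by (auto intro!: derivative_eq_intros)
    from DERIV_add[OF has_real_derivative_hfit_along[of b 0 w "axis j 1" 0] this]
    show ?thesis by (simp add: inner_axis norm_shift add.assoc)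
  qed
  then show ?thesis
    unfolding pd_w_def grad_Q_def by (simp add: vec_eq_iff DERIV_imp_deriv)
qed

lemma hfit_descent:
  "hfit n xs ys \<delta> b' w' \<le> hfit n xs ys \<delta> b w + grad_b b w * (b' - b) + grad_w b w \<bullet> (w' - w)
     + L / 2 * ((b' - b)\<^sup>2 + (norm (w' - w))\<^sup>2)"
proof -
  define D where "D = (b' - b)\<^sup>2 + (norm (w' - w))\<^sup>2"
  define c where "c i = (ys i)\<^sup>2 * (1 + (norm (xs i))\<^sup>2)" for i
  have "phiH \<delta> (margin i b' w') \<le> phiH \<delta> (margin i b w)
          + dphiH \<delta> (margin i b w) * (ys i * ((b' - b) + xs i \<bullet> (w' - w))) + c i * D / (2 * \<delta>)" for i
  proof -
    have "(margin i b' w' - margin i b w)\<^sup>2 \<le> c i * D"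
      unfolding margin_diff c_def D_def power_mult_distrib mult.assoc
      by (intro mult_left_mono sq_add_inner_le) simp
    then have "(margin i b' w' - margin i b w)\<^sup>2 / (2 * \<delta>) \<le> c i * D / (2 * \<delta>)"
      using delta_pos by (intro divide_right_mono) auto
    then show ?thesis
      using phiH_below_quadratic[OF delta_pos, of "margin i b' w'" "margin i b w"]
      unfolding margin_diff by linarith
  qed
  then have "(1 / real n) * (\<Sum>i<n. phiH \<delta> (margin i b' w'))
      \<le> (1 / real n) * (\<Sum>i<n. phiH \<delta> (margin i b w)
          + dphiH \<delta> (margin i b w) * (ys i * ((b' - b) + xs i \<bullet> (w' - w))) + c i * D / (2 * \<delta>))"
    by (intro mult_left_mono sum_mono) auto
  also have "\<dots> = hfit n xs ys \<delta> b w + (grad_b b w * (b' - b) + grad_w b w \<bullet> (w' - w))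
      + (1 / real n) * ((\<Sum>i<n. c i) * D / (2 * \<delta>))"
    unfolding hfit_eq grad_directional
    by (simp add: sum.distrib distrib_left sum_divide_distrib sum_distrib_right)
  also have "(1 / real n) * ((\<Sum>i<n. c i) * D / (2 * \<delta>)) = L / 2 * D"
    by (simp add: Lconst_def c_def)
  finally show ?thesis unfolding hfit_eq D_def by simp
qed

lemma hfit_above_tangent:
  "hfit n xs ys \<delta> b w + grad_b b w * (b' - b) + grad_w b w \<bullet> (w' - w) \<le> hfit n xs ys \<delta> b' w'"
proof -
  have "phiH \<delta> (margin i b w) + dphiH \<delta> (margin i b w) * (ys i * ((b' - b) + xs i \<bullet> (w' - w)))
          \<le> phiH \<delta> (margin i b' w')" for i
    using phiH_above_tangent[OF delta_pos] by (metis margin_diff)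
  then have "(1 / real n) * (\<Sum>i<n. phiH \<delta> (margin i b w)
          + dphiH \<delta> (margin i b w) * (ys i * ((b' - b) + xs i \<bullet> (w' - w))))
      \<le> (1 / real n) * (\<Sum>i<n. phiH \<delta> (margin i b' w'))"
    by (intro mult_left_mono sum_mono) auto
  moreover have "(1 / real n) * (\<Sum>i<n. phiH \<delta> (margin i b w)
          + dphiH \<delta> (margin i b w) * (ys i * ((b' - b) + xs i \<bullet> (w' - w))))
      = hfit n xs ys \<delta> b w + (grad_b b w * (b' - b) + grad_w b w \<bullet> (w' - w))"
    unfolding hfit_eq grad_directional by (simp add: sum.distrib distrib_left)
  ultimately show ?thesis by (simp add: hfit_eq add.assoc)
qed

definition obj :: "real \<Rightarrow> real^'p \<Rightarrow> real" where
  "obj b w = hfit n xs ys \<delta> b w + lam1 * l1norm w + lam2 / 2 * (norm w)\<^sup>2 + lam3 / 2 * b\<^sup>2"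

definition forward_w :: "real \<Rightarrow> real^'p \<Rightarrow> real^'p" where
  "forward_w b w = L *\<^sub>R w - grad_w b w"

definition step_b :: "real \<Rightarrow> real^'p \<Rightarrow> real" where
  "step_b b w = (L * b - grad_b b w) / (L + lam3)"

definition step_w :: "real \<Rightarrow> real^'p \<Rightarrow> real^'p" where
  "step_w b w = (1 / (L + lam2)) *\<^sub>R soft lam1 (forward_w b w)"

lemma step_w_component:
  "(L + lam2) * step_w b w $ j = sgn (forward_w b w $ j) * max (\<bar>forward_w b w $ j\<bar> - lam1) 0"
  using L_pos lam2_nonneg by (simp add: step_w_def soft_def)

lemma obj_step_three_point:
  "obj (step_b b w) (step_w b w) + L / 2 * ((zb - step_b b w)\<^sup>2 + (norm (zw - step_w b w))\<^sup>2)
   \<le> obj zb zw + L / 2 * ((zb - b)\<^sup>2 + (norm (zw - w))\<^sup>2)"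
proof -
  define b1 where "b1 = step_b b w"
  define w1 where "w1 = step_w b w"
  define g where "g = grad_w b w"
  have prox_b: "grad_b b w * (b1 - b) + L / 2 * (b1 - b)\<^sup>2 + lam3 / 2 * b1\<^sup>2 + 0 * \<bar>b1\<bar>
        + L / 2 * (zb - b1)\<^sup>2
      \<le> grad_b b w * (zb - b) + L / 2 * (zb - b)\<^sup>2 + lam3 / 2 * zb\<^sup>2 + 0 * \<bar>zb\<bar>"
    using L_pos lam3_pos
    by (intro soft_threshold_three_point) (auto simp: b1_def step_b_def sgn_mult_abs)
  have prox_w: "g $ j * (w1 $ j - w $ j) + L / 2 * (w1 $ j - w $ j)\<^sup>2 + lam2 / 2 * (w1 $ j)\<^sup>2
        + lam1 * \<bar>w1 $ j\<bar> + L / 2 * (zw $ j - w1 $ j)\<^sup>2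
      \<le> g $ j * (zw $ j - w $ j) + L / 2 * (zw $ j - w $ j)\<^sup>2 + lam2 / 2 * (zw $ j)\<^sup>2
        + lam1 * \<bar>zw $ j\<bar>" for j
    using L_pos lam2_nonneg lam1_pos step_w_component[of b w j]
    by (intro soft_threshold_three_point) (auto simp: w1_def g_def forward_w_def)
  have sum_sq: "(norm v)\<^sup>2 = (\<Sum>j\<in>UNIV. (v $ j)\<^sup>2)" for v :: "real^'p"
    unfolding power2_norm_eq_inner inner_vec_def by (simp add: power2_eq_square)
  have "g \<bullet> (w1 - w) + L / 2 * (norm (w1 - w))\<^sup>2 + lam2 / 2 * (norm w1)\<^sup>2 + lam1 * l1norm w1
        + L / 2 * (norm (zw - w1))\<^sup>2
      \<le> g \<bullet> (zw - w) + L / 2 * (norm (zw - w))\<^sup>2 + lam2 / 2 * (norm zw)\<^sup>2 + lam1 * l1norm zw"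
    using sum_mono[of UNIV, OF prox_w]
    by (simp add: sum.distrib sum_distrib_left inner_vec_def sum_sq l1norm_def)
  with prox_b hfit_descent[of b1 w1 b w] hfit_above_tangent[of b w zb zw]
  show ?thesis
    unfolding obj_def b1_def[symmetric] w1_def[symmetric] g_def by (simp add: algebra_simps)
qed

lemma continuous_on_obj: "continuous_on UNIV (\<lambda>p. obj (fst p) (snd p))"
  unfolding obj_def hfit_eq margin_def l1norm_def
  by (intro continuous_intros delta_pos)

lemma continuous_on_forward_w: "continuous_on UNIV (\<lambda>p. forward_w (fst p) (snd p))"
  unfolding forward_w_def grad_w_def margin_def dphiH_def
  by (intro continuous_intros) (use delta_pos in auto)

lemma bounded_obj_sublevel: "bounded {p. obj (fst p) (snd p) \<le> C}"
  unfolding bounded_iff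
proof (intro exI ballI)
  fix p assume "p \<in> {p. obj (fst p) (snd p) \<le> C}"
  then obtain b w where p: "p = (b, w)" and obj: "obj b w \<le> C" by (cases p) auto
  have "0 \<le> hfit n xs ys \<delta> b w"
    unfolding hfit_def using delta_pos by (intro mult_nonneg_nonneg sum_nonneg) (auto simp: phiH_def)
  moreover have "lam1 * norm w \<le> lam1 * l1norm w"
    unfolding l1norm_def using lam1_pos by (simp add: norm_le_l1_cart)
  moreover have "0 \<le> lam2 / 2 * (norm w)\<^sup>2" using lam2_nonneg by simp
  ultimately have "lam1 * norm w + lam3 / 2 * b\<^sup>2 \<le> C"
    using obj unfolding obj_def by linarith
  moreover have "0 \<le> lam1 * norm w" and "0 \<le> lam3 / 2 * b\<^sup>2"
    using lam1_pos lam3_pos by auto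
  ultimately have "lam1 * norm w \<le> C" and "lam3 / 2 * b\<^sup>2 \<le> C"
    by linarith+
  then have w: "norm w \<le> C / lam1" and "b\<^sup>2 \<le> C / (lam3 / 2)"
    using lam1_pos lam3_pos by (simp_all add: pos_le_divide_eq mult.commute)
  moreover have "\<bar>b\<bar> \<le> 1 + b\<^sup>2"
    using zero_le_power2[of "\<bar>b\<bar> - 1"] by (simp add: power2_eq_square algebra_simps)
  ultimately have "\<bar>b\<bar> \<le> 1 + C / (lam3 / 2)"
    by linarith
  then show "norm p \<le> 1 + C / (lam3 / 2) + C / lam1"
    using norm_Pair_le[of b w] p w by simp
qed

section \<open>Support identification\<close>

lemma grad_Q_eq: "grad_Q b w = (L + lam2) *\<^sub>R w - forward_w b w"
  by (simp add: grad_Q_def forward_w_def algebra_simps)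

context
  fixes bstar :: real and wstar :: "real^'p"
  assumes obj_min: "\<And>b w. obj bstar wstar \<le> obj b w"
    and obj_min_unique: "\<And>b w. obj b w = obj bstar wstar \<Longrightarrow> b = bstar \<and> w = wstar"
begin

lemma minimizer_fixed_point: "step_w bstar wstar = wstar"
proof -
  have "0 \<le> L / 2 * ((bstar - step_b bstar wstar)\<^sup>2 + (norm (wstar - step_w bstar wstar))\<^sup>2)"
    using L_pos by simp
  then have "obj (step_b bstar wstar) (step_w bstar wstar) \<le> obj bstar wstar"
    using obj_step_three_point[of bstar wstar bstar wstar] by simp
  then show ?thesis
    using obj_min obj_min_unique by (meson order_antisym)
qed

lemma minimizer_step_component:
  "(L + lam2) * wstar $ j
   = sgn (forward_w bstar wstar $ j) * max (\<bar>forward_w bstar wstar $ j\<bar> - lam1) 0"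
  using step_w_component[of bstar wstar j] by (simp add: minimizer_fixed_point)

lemma minimizer_support:
  assumes "wstar $ j \<noteq> 0"
  shows "\<bar>grad_Q bstar wstar $ j\<bar> = lam1"
proof -
  have "\<bar>(L + lam2) * wstar $ j - forward_w bstar wstar $ j\<bar> = lam1"
    by (rule soft_threshold_nonzero[OF _ _ minimizer_step_component assms])
       (use L_pos lam2_nonneg lam1_pos in auto)
  then show ?thesis by (simp add: grad_Q_eq)
qed

lemma forward_w_minimizer_inactive:
  assumes "\<bar>grad_Q bstar wstar $ j\<bar> < lam1"
  shows "\<bar>forward_w bstar wstar $ j\<bar> < lam1"
proof -
  have "wstar $ j = 0" using minimizer_support assms by (metis less_irrefl)
  then show ?thesis using assms by (simp add: grad_Q_eq)
qed

lemma forward_w_minimizer_active: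
  assumes "\<bar>grad_Q bstar wstar $ j\<bar> = lam1"
  shows "forward_w bstar wstar $ j \<noteq> 0"
proof
  assume "forward_w bstar wstar $ j = 0"
  then have "(L + lam2) * wstar $ j = 0"
    using minimizer_step_component by simp
  then have "wstar $ j = 0"
    using L_pos lam2_nonneg by simp
  then show False using assms lam1_pos \<open>forward_w bstar wstar $ j = 0\<close> by (simp add: grad_Q_eq)
qed

context
  fixes bs :: "nat \<Rightarrow> real" and ws :: "nat \<Rightarrow> real^'p"
  assumes bs_Suc: "\<And>k. bs (Suc k) = step_b (bs k) (ws k)"
    and ws_Suc: "\<And>k. ws (Suc k) = step_w (bs k) (ws k)"
begin

lemma obj_iterates_tendsto: "(\<lambda>k. obj (bs k) (ws k)) \<longlonglongrightarrow> obj bstar wstar"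
proof -
  define D where "D k = L / 2 * ((bstar - bs k)\<^sup>2 + (norm (wstar - ws k))\<^sup>2)" for k
  have "(\<lambda>k. obj (bs (Suc k)) (ws (Suc k)) - obj bstar wstar) \<longlonglongrightarrow> 0"
  proof (rule tendsto_zero_if_dominated_by_decrease[where D = D])
    show "0 \<le> obj (bs (Suc k)) (ws (Suc k)) - obj bstar wstar" for k
      using obj_min by simp
    show "0 \<le> D k" for k
      using L_pos by (simp add: D_def)
    show "obj (bs (Suc k)) (ws (Suc k)) - obj bstar wstar + D (Suc k) \<le> D k" for k
      using obj_step_three_point[of "bs k" "ws k" bstar wstar] by (simp add: D_def bs_Suc ws_Suc)
  qed
  then have "(\<lambda>k. obj (bs (Suc k)) (ws (Suc k))) \<longlonglongrightarrow> obj bstar wstar"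
    by (simp add: LIM_zero_iff)
  then show ?thesis by (rule LIMSEQ_imp_Suc)
qed

lemma iterates_tendsto: "(\<lambda>k. (bs k, ws k)) \<longlonglongrightarrow> (bstar, wstar)"
  by (rule minimizing_sequence_tendsto[OF continuous_on_obj bounded_obj_sublevel])
     (use obj_min obj_min_unique obj_iterates_tendsto in auto)

lemma forward_w_iterates_tendsto:
  "(\<lambda>k. forward_w (bs k) (ws k) $ j) \<longlonglongrightarrow> forward_w bstar wstar $ j"
  using continuous_on_tendsto_compose[OF continuous_on_forward_w iterates_tendsto]
  by (intro tendsto_vec_nth) simp

lemma eventually_inactive_zero:
  assumes "\<bar>grad_Q bstar wstar $ j\<bar> < lam1"
  shows "eventually (\<lambda>k. ws k $ j = 0) sequentially"
proof -
  have "eventually (\<lambda>k. \<bar>forward_w (bs k) (ws k) $ j\<bar> < lam1) sequentially"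
    using forward_w_minimizer_inactive[OF assms]
    by (rule order_tendstoD(2)[OF tendsto_rabs[OF forward_w_iterates_tendsto]])
  then have "eventually (\<lambda>k. ws (Suc k) $ j = 0) sequentially"
  proof eventually_elim
    case (elim k)
    then have "(L + lam2) * step_w (bs k) (ws k) $ j = 0"
      using step_w_component lam1_pos by (simp add: max_def)
    then show ?case using L_pos lam2_nonneg by (simp add: ws_Suc)
  qed
  then show ?thesis by (rule eventually_sequentially_Suc[THEN iffD1])
qed

lemma eventually_active_sign:
  assumes "\<bar>grad_Q bstar wstar $ j\<bar> = lam1"
  shows "eventually (\<lambda>k. sgn (forward_w (bs k) (ws k) $ j) = sgn (forward_w bstar wstar $ j))
           sequentially"
proof (cases "forward_w bstar wstar $ j > 0")
  case True
  have "eventually (\<lambda>k. forward_w (bs k) (ws k) $ j > 0) sequentially"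
    using order_tendstoD(1)[OF forward_w_iterates_tendsto True] .
  then show ?thesis by eventually_elim (use True in simp)
next
  case False
  then have "forward_w bstar wstar $ j < 0"
    using forward_w_minimizer_active[OF assms] by simp
  then have "eventually (\<lambda>k. forward_w (bs k) (ws k) $ j < 0) sequentially"
    by (rule order_tendstoD(2)[OF forward_w_iterates_tendsto])
  then show ?thesis by eventually_elim (use \<open>forward_w bstar wstar $ j < 0\<close> in simp)
qed

end

end

end

theorem lemma1:
  fixes n :: nat and xs :: "nat \<Rightarrow> real^'p" and ys :: "nat \<Rightarrow> real"
    and lam1 lam2 lam3 \<delta> :: real
    and bs :: "nat \<Rightarrow> real" and ws :: "nat \<Rightarrow> real^'p"
    and bstar :: real and wstar :: "real^'p"
  assumes n: "n \<ge> 1"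
    and y: "\<forall>i<n. ys i \<in> {-1, 1}"
    and l1: "lam1 > 0" and l2: "lam2 \<ge> 0" and l3: "lam3 > 0" and d: "\<delta> > 0"
  defines "f \<equiv> hfit n xs ys \<delta>"
    and "Lf \<equiv> Lconst n xs ys \<delta>"
    and "F \<equiv> (\<lambda>b w. hfit n xs ys \<delta> b w + lam1 * l1norm w + lam2 / 2 * (norm w)^2 + lam3 / 2 * b^2)"
    and "Q \<equiv> (\<lambda>b w. hfit n xs ys \<delta> b w + lam2 / 2 * (norm w)^2 + lam3 / 2 * b^2)"
  assumes umin: "\<forall>b w. F bstar wstar \<le> F b w"
    and uuniq: "\<forall>b w. F b w = F bstar wstar \<longrightarrow> b = bstar \<and> w = wstar"
    and bit: "\<forall>k. bs (Suc k) = (Lf * bs k - pd_b f (bs k) (ws k)) / (Lf + lam3)"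
    and wit: "\<forall>k. ws (Suc k) = (1 / (Lf + lam2)) *\<^sub>R soft lam1 (Lf *\<^sub>R ws k - pd_w f (bs k) (ws k))"
  defines "h \<equiv> (\<lambda>b w i. w $ i - (1 / (Lconst n xs ys \<delta> + lam2)) * (pd_w Q b w $ i))"
    and "I \<equiv> {i. \<bar>pd_w Q bstar wstar $ i\<bar> < lam1}"
    and "E \<equiv> {i. \<bar>pd_w Q bstar wstar $ i\<bar> = lam1}"
  shows "{i. wstar $ i \<noteq> 0} \<subseteq> E \<and> (\<forall>i\<in>I. wstar $ i = 0) \<and>
         finite {k. \<not> ((\<forall>i\<in>I. ws k $ i = 0) \<and>
                        (\<forall>i\<in>E. sgn (h (bs k) (ws k) i) = sgn (h bstar wstar i)))}"
proof -
  interpret huberized_svm n xs ys \<delta> lam1 lam2 lam3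
    using n y l1 l2 l3 d by unfold_locales
  have obj: "F = obj" by (simp add: F_def obj_def fun_eq_iff)
  have gQ: "pd_w Q b w = grad_Q b w" for b w
    unfolding Q_def by (rule pd_w_penalized)
  have h: "h b w i = forward_w b w $ i / (L + lam2)" for b w i
    using L_pos lam2_nonneg by (simp add: h_def gQ grad_Q_eq field_simps)
  note min = umin[unfolded obj, rule_format] and unique = uuniq[unfolded obj, rule_format]
  have bs: "bs (Suc k) = step_b (bs k) (ws k)" and ws: "ws (Suc k) = step_w (bs k) (ws k)" for k
    using bit wit by (simp_all add: f_def Lf_def pd_b_hfit pd_w_hfit step_b_def step_w_def forward_w_def)
  have supp: "{i. wstar $ i \<noteq> 0} \<subseteq> E"
    using minimizer_support[OF min unique] by (auto simp: E_def gQ)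
  have "eventually (\<lambda>k. (\<forall>i\<in>I. ws k $ i = 0) \<and>
                        (\<forall>i\<in>E. sgn (h (bs k) (ws k) i) = sgn (h bstar wstar i))) sequentially"
    using eventually_inactive_zero[of bstar wstar bs ws, OF min unique bs ws]
      eventually_active_sign[of bstar wstar bs ws, OF min unique bs ws]
      L_pos lam2_nonneg
    by (intro eventually_conj eventually_ball_finite) (auto simp: I_def E_def gQ h sgn_divide)
  then have "finite {k. \<not> ((\<forall>i\<in>I. ws k $ i = 0) \<and>
                        (\<forall>i\<in>E. sgn (h (bs k) (ws k) i) = sgn (h bstar wstar i)))}"
    by (simp add: cofinite_eq_sequentially[symmetric] eventually_cofinite)
  moreover have "\<forall>i\<in>I. wstar $ i = 0"
    using supp l1 by (auto simp: I_def E_def)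
  ultimately show ?thesis using supp by blast
qed

end
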